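(* Let $\theta_0\in\,]0,\pi/2[$, $\ell,\kappa,\rho>0$. Let $\widehat\zeta:\,]-\infty,0]\to\mathbb R$ be the solution of the backward Cauchy problem $$\zeta'(t)=-\frac{\rho\kappa}{\sin\Big(\varphi\big((e^{-\kappa}-1)e^{\zeta(t)}\big)\Big)},\qquad \zeta(0)=0,$$ and set $\widehat\theta(t)=\varphi\big((e^{-\kappa}-1)e^{\widehat\zeta(t)}\big)$ for $t\le0$. Let $\bar h>0$ be the number such that $\int_{-\bar h}^0\frac{dt}{\sin\widehat\theta(t)}=\ell$. If $(I^*,(h^*,\theta^* ))$ is a competitive equilibrium, then $h^*=\bar h$ and $\theta^*(y)=\widehat\theta(y-\bar h)$ for a.e. $y\in[0,\bar h]$. In particular there is at most one competitive equilibrium.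
   Context: Model 1. For $\theta\in[\theta_0,\pi/2]$ define $G(\theta)=\Big(1-\exp\Big\{\frac{-\kappa}{\cos(\theta-\theta_0)}\Big\}\Big)\cos(\theta-\theta_0)$ and $g(\theta)=G(\theta)/\sin\theta$. The function $\varphi:\,]-\infty,e^{-\kappa}-1]\to[\theta_0,\pi/2[$ is defined by: $\varphi(z)$ is the unique $\theta\in[\theta_0,\pi/2[$ with $G'(\theta)\tan\theta-G(\theta)=z$. Given a non-decreasing $I:[0,\infty)\to[0,1]$, problem (OP1) is: among all pairs $(h,\theta)$ with $h>0$, $\theta:[0,h]\to[\theta_0,\pi/2]$ measurable and $\int_0^h \frac{dy}{\sin\theta(y)}=\ell$, maximize $\int_0^h I(y)\,g(\theta(y))\,dy$. Competitive equilibrium: $I^*:[0,\infty)\to[0,1]$ and $(h^*,\theta^* )$, $\theta^*:[0,h^*]\to[\theta_0,\pi/2]$, such that (i) $(h^*,\theta^* )$ is optimal for (OP1) with $I=I^*$, and (ii) $I^*(y)=\exp\Big\{-\rho\int_{\min\{y,h^*\}}^{h^*}\frac{\kappa}{\sin\theta^*(\eta)}\,d\eta\Big\}$ for all $y\ge0$. *)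

theory Defs
  imports "HOL-Analysis.Analysis"
begin

definition G :: "real \<Rightarrow> real \<Rightarrow> real \<Rightarrow> real" where
  "G \<theta>0 \<kappa> \<theta> = (1 - exp (- \<kappa> / cos (\<theta> - \<theta>0))) * cos (\<theta> - \<theta>0)"

definition g :: "real \<Rightarrow> real \<Rightarrow> real \<Rightarrow> real" where
  "g \<theta>0 \<kappa> \<theta> = G \<theta>0 \<kappa> \<theta> / sin \<theta>"

text \<open>phi z is the unique theta in [theta0, pi/2) with G'(theta) tan theta - G(theta) = z,
  for z <= exp(-kappa) - 1.\<close>
definition phi :: "real \<Rightarrow> real \<Rightarrow> real \<Rightarrow> real" where
  "phi \<theta>0 \<kappa> z = (THE \<theta>. \<theta> \<in> {\<theta>0..<pi/2} \<and>
      deriv (G \<theta>0 \<kappa>) \<theta> * tan \<theta> - G \<theta>0 \<kappa> \<theta> = z)"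

definition OP1_feasible :: "real \<Rightarrow> real \<Rightarrow> real \<Rightarrow> (real \<Rightarrow> real) \<Rightarrow> bool" where
  "OP1_feasible \<theta>0 L h \<theta> \<longleftrightarrow>
     h > 0 \<and> \<theta> \<in> borel_measurable (lebesgue_on {0..h}) \<and>
     (\<forall>y\<in>{0..h}. \<theta> y \<in> {\<theta>0..pi/2}) \<and>
     (\<lambda>y. 1 / sin (\<theta> y)) integrable_on {0..h} \<and>
     integral {0..h} (\<lambda>y. 1 / sin (\<theta> y)) = L"

definition OP1_value :: "real \<Rightarrow> real \<Rightarrow> (real \<Rightarrow> real) \<Rightarrow> real \<Rightarrow> (real \<Rightarrow> real) \<Rightarrow> real" where
  "OP1_value \<theta>0 \<kappa> I h \<theta> = integral {0..h} (\<lambda>y. I y * g \<theta>0 \<kappa> (\<theta> y))"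

definition OP1_optimal ::
  "real \<Rightarrow> real \<Rightarrow> real \<Rightarrow> (real \<Rightarrow> real) \<Rightarrow> real \<Rightarrow> (real \<Rightarrow> real) \<Rightarrow> bool" where
  "OP1_optimal \<theta>0 L \<kappa> I h \<theta> \<longleftrightarrow>
     OP1_feasible \<theta>0 L h \<theta> \<and>
     (\<forall>h' \<theta>'. OP1_feasible \<theta>0 L h' \<theta>' \<longrightarrow>
        OP1_value \<theta>0 \<kappa> I h' \<theta>' \<le> OP1_value \<theta>0 \<kappa> I h \<theta>)"

definition competitive_equilibrium ::
  "real \<Rightarrow> real \<Rightarrow> real \<Rightarrow> real \<Rightarrow> (real \<Rightarrow> real) \<Rightarrow> real \<Rightarrow> (real \<Rightarrow> real) \<Rightarrow> bool" where
  "competitive_equilibrium \<theta>0 L \<kappa> \<rho> I h \<theta> \<longleftrightarrow>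
     (\<forall>y\<ge>0. I y \<in> {0..1}) \<and>
     OP1_optimal \<theta>0 L \<kappa> I h \<theta> \<and>
     (\<forall>y\<ge>0. I y = exp (- \<rho> * integral {min y h..h} (\<lambda>\<eta>. \<kappa> / sin (\<theta> \<eta>))))"

end

theory Submission
  imports Defs
begin

text \<open>
  Write \<open>Z(\<theta>) = G'(\<theta>) tan \<theta> - G(\<theta>)\<close>. It is strictly decreasing on \<open>[\<theta>0, \<pi>/2[\<close>, starts at
  \<open>e\<^sup>-\<^sup>\<kappa> - 1\<close> and is unbounded below, so \<open>\<phi>\<close> is its continuous decreasing inverse. Since
  \<open>d/d\<theta> (q g(\<theta>) - \<mu>/sin \<theta>) = cos \<theta>/sin\<^sup>2 \<theta> \<cdot> (q Z(\<theta>) + \<mu>)\<close>, for \<open>q > 0\<close> the function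
  \<open>q g(\<theta>) - \<mu>/sin \<theta>\<close> has the unique maximiser \<open>\<phi>(-\<mu>/q)\<close>.

  In an equilibrium \<open>Istar > 0\<close>; take \<open>\<lambda> = 1 - e\<^sup>-\<^sup>\<kappa> = G(\<theta>0)\<close> as multiplier of the length
  constraint. Then \<open>T(y) = \<phi>(-\<lambda>/Istar(y))\<close> maximises the Lagrangian \<open>Istar g(\<theta>) - \<lambda>/sin \<theta>\<close>
  pointwise, and two competitors show that optimality forces \<open>\<theta>star = T\<close> a.e.: if the path \<open>T\<close>
  on \<open>[0, hstar]\<close> is too short, prolong it by \<open>\<theta>0\<close> beyond \<open>hstar\<close>, where \<open>Istar = 1\<close> and the
  Lagrangian vanishes; if it is too long, follow \<open>T\<close> on an initial piece and cut off a final
  piece of \<open>[0, hstar]\<close>, where \<open>Istar < 1\<close> makes the Lagrangian strictly negative.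

  Consequently \<open>K(y) = \<rho> * integral {y..hstar} (\<lambda>\<eta>. \<kappa> / sin (\<theta>star \<eta>))\<close> solves
  \<open>K' = -\<rho>\<kappa>/sin \<phi>((e\<^sup>-\<^sup>\<kappa> - 1) e\<^sup>K)\<close>, \<open>K(hstar) = 0\<close>, and so does \<open>\<zeta>(\<cdot> - hstar)\<close>. The right-hand side is monotone in \<open>K \<ge> 0\<close>, so
  the two solutions agree, i.e. \<open>\<theta>star = \<theta>hat(\<cdot> - hstar)\<close> a.e. As \<open>1/sin \<ge> 1\<close>, the length
  constraint then leaves only \<open>hstar = hbar\<close>.
\<close>

lemma one_plus_lt_exp: fixes x :: real assumes "x \<noteq> 0" shows "1 + x < exp x"
proof (cases "1 + x/2 \<ge> 0")
  case False
  then show ?thesis using exp_gt_zero[of x] by linarith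
next
  case True
  have "x * x > 0" by (metis assms not_real_square_gt_zero)
  have "1 + x/2 \<le> exp (x/2)" by (rule exp_ge_add_one_self)
  then have "(1 + x/2) * (1 + x/2) \<le> exp (x/2) * exp (x/2)"
    using True by (intro mult_mono) auto
  moreover have "exp x = exp (x/2) * exp (x/2)" by (simp flip: exp_add)
  ultimately show ?thesis using \<open>x * x > 0\<close> by (simp add: algebra_simps)
qed

lemma negligible_if_AE_lebesgue: "AE x in lebesgue. P x \<Longrightarrow> negligible {x. \<not> P x}"
  using eventually_ae_filter_negligible negligible_subset by blast

lemma AE_eq_0_if_integral_eq_0:
  fixes f :: "real \<Rightarrow> real"
  assumes "f integrable_on {a..b}" "\<And>x. x \<in> {a..b} \<Longrightarrow> 0 \<le> f x" "integral {a..b} f = 0"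
  shows "AE x in lebesgue. x \<in> {a..b} \<longrightarrow> f x = 0"
proof -
  have "f absolutely_integrable_on {a..b}"
    using assms nonnegative_absolutely_integrable_1 by blast
  then have int: "integrable (lebesgue_on {a..b}) f"
    by (simp add: integrable_restrict_space set_integrable_def)
  then have "integral\<^sup>L (lebesgue_on {a..b}) f = 0"
    using lebesgue_integral_eq_integral[OF int] assms(3) by simp
  then have "AE x in lebesgue_on {a..b}. f x = 0"
    using integral_nonneg_eq_0_iff_AE[OF int] assms(2) by (simp add: AE_restrict_space_iff)
  then show ?thesis by (simp add: AE_restrict_space_iff)
qed

lemma integral_if_le_split:
  fixes f g :: "real \<Rightarrow> real"
  assumes "0 \<le> r" "r \<le> b" "f integrable_on {0..r}" "g integrable_on {r..b}"
  shows "(\<lambda>y. if y \<le> r then f y else g y) integrable_on {0..b}"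
    and "integral {0..b} (\<lambda>y. if y \<le> r then f y else g y) = integral {0..r} f + integral {r..b} g"
proof -
  let ?F = "\<lambda>y. if y \<le> r then f y else g y"
  have i1: "?F integrable_on {0..r}" by (rule integrable_eq[OF assms(3)]) auto
  have e1: "integral {0..r} ?F = integral {0..r} f"
    by (rule Henstock_Kurzweil_Integration.integral_cong) auto
  have i2: "?F integrable_on {r..b}" by (rule integrable_spike[OF assms(4) negligible_sing[of r]]) auto
  have e2: "integral {r..b} ?F = integral {r..b} g"
    by (rule integral_spike[OF negligible_sing[of r]]) auto
  show i: "?F integrable_on {0..b}"
    by (rule Henstock_Kurzweil_Integration.integrable_combine[OF assms(1,2) i1 i2])
  show "integral {0..b} ?F = integral {0..r} f + integral {r..b} g"
    using Henstock_Kurzweil_Integration.integral_combine[OF assms(1,2) i] e1 e2 by simp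
qed

lemma borel_measurable_if_le_lebesgue_on:
  fixes r :: real
  assumes "u \<in> borel_measurable (lebesgue_on S)" "v \<in> borel_measurable (lebesgue_on S)"
  shows "(\<lambda>y. if y \<le> r then u y else v y) \<in> borel_measurable (lebesgue_on S)"
proof -
  have "{..r} \<in> sets lebesgue" by (simp add: borel_closed sets_completionI_sets)
  then have "{..r} \<inter> space (lebesgue_on S) \<in> sets (lebesgue_on S)"
    by (auto simp: sets_restrict_space image_iff intro!: bexI[of _ "{..r}"])
  from measurable_If_set[OF assms this] show ?thesis by simp
qed

lemma left_endpoint_unique_if_integrand_ge:
  fixes f :: "real \<Rightarrow> real"
  assumes "a \<le> c" "b \<le> c" "0 < m" "\<And>x. x \<in> {min a b..c} \<Longrightarrow> m \<le> f x"
    and "f integrable_on {a..c}" "f integrable_on {b..c}"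
    and "integral {a..c} f = integral {b..c} f"
  shows "a = b"
proof -
  have gain: "integral {a'..c} f \<ge> integral {b'..c} f + m * (b' - a')"
    if "a' \<le> b'" "b' \<le> c" "f integrable_on {a'..c}" "{a'..c} \<subseteq> {min a b..c}" for a' b'
  proof -
    have "integral {a'..b'} f + integral {b'..c} f = integral {a'..c} f"
      using that by (intro Henstock_Kurzweil_Integration.integral_combine) auto
    moreover have "integral {a'..b'} (\<lambda>_. m) \<le> integral {a'..b'} f"
      using that assms(4) by (intro integral_le integrable_on_subinterval[OF that(3)]) auto
    ultimately show ?thesis using that by (simp add: mult.commute)
  qed
  show ?thesis
  proof (rule ccontr)
    assume "a \<noteq> b"
    then consider "a < b" | "b < a" by linarith
    then show False
    proof cases
      case 1
      then have "0 < m * (b - a)" using assms by simp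
      with 1 gain[of a b] assms show False by (simp add: min_def)
    next
      case 2
      then have "0 < m * (a - b)" using assms by simp
      with 2 gain[of b a] assms show False by (simp add: min_def)
    qed
  qed
qed

lemma nonneg_if_deriv_neg_at_zeros:
  fixes \<zeta> :: "real \<Rightarrow> real"
  assumes cont: "continuous_on {..0} \<zeta>" and "\<zeta> 0 = 0"
    and deriv: "\<And>s. s \<le> 0 \<Longrightarrow> \<zeta> s = 0 \<Longrightarrow> \<exists>D<0. (\<zeta> has_real_derivative D) (at s within {..0})"
    and "t \<le> 0"
  shows "0 \<le> \<zeta> t"
proof (rule ccontr)
  assume "\<not> 0 \<le> \<zeta> t"
  then have t: "\<zeta> t < 0" "t < 0" using assms by (auto simp: le_less)
  define S where "S = {u \<in> {t..0}. \<zeta> u = 0}"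
  have "closed S" unfolding S_def
    by (intro continuous_closed_preimage_constant continuous_on_subset[OF cont]) auto
  moreover have "0 \<in> S" "bdd_below S" using t assms unfolding S_def by (auto intro: bdd_belowI[of _ t])
  ultimately have "Inf S \<in> S" using closed_contains_Inf by blast
  then obtain s where s: "s = Inf S" "t \<le> s" "s \<le> 0" "\<zeta> s = 0" unfolding S_def by auto
  \<comment> \<open>\<open>s\<close> is the first zero after \<open>t\<close>, so by the intermediate value theorem \<open>\<zeta> < 0\<close> on \<open>[t, s[\<close>\<close>
  have below: "\<zeta> u < 0" if u: "t \<le> u" "u < s" for u
  proof (rule ccontr)
    assume "\<not> \<zeta> u < 0"
    moreover have "continuous_on {t..u} \<zeta>" using u s by (intro continuous_on_subset[OF cont]) auto
    ultimately obtain v where v: "t \<le> v" "v \<le> u" "\<zeta> v = 0" using IVT'[of \<zeta> t 0 u] t u by auto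
    then have "v \<in> S" unfolding S_def using u s by auto
    then have "s \<le> v" unfolding s(1) using \<open>bdd_below S\<close> by (rule cInf_lower)
    then show False using v u by simp
  qed
  obtain D where "D < 0" "(\<zeta> has_real_derivative D) (at s within {..0})" using deriv s by blast
  then obtain d where d: "d > 0" "\<And>e. e > 0 \<Longrightarrow> s - e \<in> {..0} \<Longrightarrow> e < d \<Longrightarrow> \<zeta> s < \<zeta> (s - e)"
    using has_real_derivative_neg_dec_left by blast
  define e where "e = min (d/2) (s - t)"
  have "s \<noteq> t" using s t by auto
  then have "e > 0" "e < d" "t \<le> s - e" using d s unfolding e_def by auto
  then show False using d(2)[of e] below[of "s - e"] s by auto
qed

lemma antitone_ode_solutions_eq:
  fixes u v f :: "real \<Rightarrow> real"
  assumes y: "y \<in> {a..b}"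
    and u: "\<And>x. x \<in> {a..b} \<Longrightarrow> (u has_real_derivative - f (u x)) (at x within {a..b})"
    and v: "\<And>x. x \<in> {a..b} \<Longrightarrow> (v has_real_derivative - f (v x)) (at x within {a..b})"
    and nonneg: "\<And>x. x \<in> {a..b} \<Longrightarrow> 0 \<le> u x" "\<And>x. x \<in> {a..b} \<Longrightarrow> 0 \<le> v x"
    and antitone: "\<And>w1 w2. 0 \<le> w1 \<Longrightarrow> w1 \<le> w2 \<Longrightarrow> f w2 \<le> f w1"
    and "u b = v b"
  shows "u y = v y"
proof -
  define Q where "Q x = (u x - v x)\<^sup>2" for x
  define Q' where "Q' x = 2 * ((u x - v x) * (f (v x) - f (u x)))" for x
  have dQ: "(Q has_real_derivative Q' x) (at x within {a..b})" if "x \<in> {a..b}" for x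
    unfolding Q_def[abs_def] Q'_def
    by (rule derivative_eq_intros u[OF that] v[OF that] refl)+ (simp add: algebra_simps)
  have Q'_nonneg: "0 \<le> Q' x" if "x \<in> {a..b}" for x
  proof (cases "u x \<le> v x")
    case True
    then show ?thesis
      using antitone[of "u x" "v x"] nonneg that unfolding Q'_def by (simp add: mult_nonpos_nonpos)
  next
    case False
    then show ?thesis
      using antitone[of "v x" "u x"] nonneg that unfolding Q'_def by simp
  qed
  have "continuous_on {a..b} Q" using dQ by (intro DERIV_continuous_on) auto
  then have "Q y \<le> Q b"
  proof (intro DERIV_nonneg_imp_increasing_open[of y b Q])
    fix x assume x: "y < x" "x < b"
    then have "x \<in> interior {a..b}" using y by auto
    then have "(Q has_real_derivative Q' x) (at x)"
      using dQ[of x] x y at_within_interior by fastforce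
    then show "\<exists>D. (Q has_real_derivative D) (at x) \<and> 0 \<le> D" using Q'_nonneg[of x] x y by auto
  qed (use y in \<open>auto intro: continuous_on_subset\<close>)
  then show ?thesis using \<open>u b = v b\<close> unfolding Q_def by simp
qed

section \<open>The function \<open>\<phi>\<close> and the pointwise maximisation\<close>

locale model_constants =
  fixes \<theta>0 \<kappa> :: real
  assumes \<theta>0: "0 < \<theta>0" "\<theta>0 < pi/2" and \<kappa>: "0 < \<kappa>"
begin

text \<open>\<open>A\<close> is chosen so that \<open>G'(\<theta>) = - A(cos (\<theta> - \<theta>0)) sin (\<theta> - \<theta>0)\<close>.\<close>

definition A :: "real \<Rightarrow> real" where "A c = 1 - exp (-\<kappa>/c) - \<kappa>/c * exp (-\<kappa>/c)"
definition A' :: "real \<Rightarrow> real" where "A' c = - (\<kappa>^2 / c^3) * exp (-\<kappa>/c)"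

lemma A_deriv: "c > 0 \<Longrightarrow> (A has_real_derivative A' c) (at c)"
  unfolding A_def A'_def
  by (rule derivative_eq_intros refl | simp)+
     (simp add: field_simps power2_eq_square power3_eq_cube)

lemma A'_neg: "c > 0 \<Longrightarrow> A' c < 0"
  unfolding A'_def using \<kappa> by simp

lemma A_pos: assumes "c > 0" shows "A c > 0"
proof -
  have "1 + \<kappa>/c < exp (\<kappa>/c)" using one_plus_lt_exp[of "\<kappa>/c"] assms \<kappa> by simp
  then have "(1 + \<kappa>/c) * exp (-\<kappa>/c) < exp (\<kappa>/c) * exp (-\<kappa>/c)"
    by (rule mult_strict_right_mono) simp
  also have "exp (\<kappa>/c) * exp (-\<kappa>/c) = 1" by (simp flip: exp_add)
  finally show ?thesis unfolding A_def by (simp add: algebra_simps)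
qed

lemma A_antimono: assumes "0 < c1" "c1 \<le> c2" shows "A c2 \<le> A c1"
  using DERIV_nonpos_imp_decreasing_open[of c1 c2 A] assms A_deriv A'_neg
  by (smt (verit) DERIV_isCont continuous_at_imp_continuous_on atLeastAtMost_iff)

lemma cos_diff_\<theta>0_pos: "\<theta>0 \<le> x \<Longrightarrow> x \<le> pi/2 \<Longrightarrow> cos (x - \<theta>0) > 0"
  using \<theta>0 by (intro cos_gt_zero_pi) auto

lemma sin_pos: "\<theta>0 \<le> x \<Longrightarrow> x \<le> pi/2 \<Longrightarrow> sin x > 0"
  using \<theta>0 by (intro sin_gt_zero) auto

lemma G_deriv:
  assumes "cos (x - \<theta>0) > 0"
  shows "(G \<theta>0 \<kappa> has_real_derivative (- A (cos (x - \<theta>0)) * sin (x - \<theta>0))) (at x)"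
proof -
  have "((\<lambda>x. (1 - exp (-\<kappa> / cos (x - \<theta>0))) * cos (x - \<theta>0)) has_real_derivative
      (- (1 - exp (-\<kappa>/cos (x - \<theta>0)) - \<kappa>/cos (x - \<theta>0) * exp (-\<kappa>/cos (x - \<theta>0)))) * sin (x - \<theta>0)) (at x)"
    using assms by (auto intro!: derivative_eq_intros simp: field_simps)
  then show ?thesis unfolding G_def[abs_def] A_def by simp
qed

lemma G_continuous_on: "continuous_on {\<theta>0..pi/2} (G \<theta>0 \<kappa>)"
  by (intro continuous_at_imp_continuous_on ballI DERIV_isCont[OF G_deriv] cos_diff_\<theta>0_pos) auto

lemma G_at_\<theta>0: "G \<theta>0 \<kappa> \<theta>0 = 1 - exp (-\<kappa>)"
  unfolding G_def by simp

lemma G_nonneg: assumes "\<theta>0 \<le> x" "x \<le> pi/2" shows "G \<theta>0 \<kappa> x \<ge> 0"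
proof -
  have c: "cos (x - \<theta>0) > 0" using cos_diff_\<theta>0_pos assms by auto
  then have "exp (-\<kappa> / cos (x - \<theta>0)) \<le> 1" using \<kappa> by simp
  then show ?thesis unfolding G_def using c by simp
qed

lemma G_le: assumes "\<theta>0 \<le> x" "x \<le> pi/2" shows "G \<theta>0 \<kappa> x \<le> 1 - exp (-\<kappa>)"
proof -
  have "G \<theta>0 \<kappa> x \<le> G \<theta>0 \<kappa> \<theta>0"
  proof (rule DERIV_nonpos_imp_decreasing_open[OF assms(1)])
    fix y assume y: "\<theta>0 < y" "y < x"
    have c: "cos (y - \<theta>0) > 0" using cos_diff_\<theta>0_pos y assms by auto
    have "sin (y - \<theta>0) > 0" using y assms \<theta>0 by (intro sin_gt_zero2) auto
    then have "- A (cos (y - \<theta>0)) * sin (y - \<theta>0) \<le> 0" using A_pos[OF c] by simp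
    then show "\<exists>D. DERIV (G \<theta>0 \<kappa>) y :> D \<and> D \<le> 0" using G_deriv[OF c] by blast
  qed (use continuous_on_subset[OF G_continuous_on] assms in auto)
  then show ?thesis using G_at_\<theta>0 by simp
qed

lemma sin_\<theta>0_le: assumes "\<theta>0 \<le> x" "x \<le> pi/2" shows "sin \<theta>0 \<le> sin x"
  using assms \<theta>0 by (intro sin_monotone_2pi_le) auto

lemma g_bounds: assumes "\<theta>0 \<le> x" "x \<le> pi/2"
  shows "0 \<le> g \<theta>0 \<kappa> x" "g \<theta>0 \<kappa> x \<le> (1 - exp (-\<kappa>)) / sin \<theta>0"
proof -
  have s: "sin x > 0" using sin_pos assms by auto
  show "0 \<le> g \<theta>0 \<kappa> x" unfolding g_def using G_nonneg[OF assms] s by simp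
  have "g \<theta>0 \<kappa> x \<le> (1 - exp (-\<kappa>)) / sin x"
    unfolding g_def using G_le[OF assms] s by (simp add: divide_right_mono)
  also have "\<dots> \<le> (1 - exp (-\<kappa>)) / sin \<theta>0"
    using sin_\<theta>0_le[OF assms] sin_pos[of \<theta>0] \<theta>0 \<kappa> by (intro divide_left_mono) auto
  finally show "g \<theta>0 \<kappa> x \<le> (1 - exp (-\<kappa>)) / sin \<theta>0" .
qed

lemma inverse_sin_bounds: assumes "\<theta>0 \<le> x" "x \<le> pi/2"
  shows "1 \<le> 1 / sin x" "1 / sin x \<le> 1 / sin \<theta>0"
  using sin_pos[OF assms] sin_le_one[of x] sin_\<theta>0_le[OF assms] sin_pos[of \<theta>0] \<theta>0
  by (auto simp: frac_le)

text \<open>\<open>Z(\<theta>) = G'(\<theta>) tan \<theta> - G(\<theta>)\<close>, whose inverse is \<open>\<phi>\<close>.\<close>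

definition Z :: "real \<Rightarrow> real" where
  "Z x = - A (cos (x - \<theta>0)) * sin (x - \<theta>0) * tan x - G \<theta>0 \<kappa> x"

definition Z' :: "real \<Rightarrow> real" where
  "Z' x = A' (cos (x - \<theta>0)) * (sin (x - \<theta>0))\<^sup>2 * tan x - A (cos (x - \<theta>0)) * cos (x - \<theta>0) * tan x
     - A (cos (x - \<theta>0)) * sin (x - \<theta>0) * (tan x)\<^sup>2"

lemma deriv_G_tan_minus_G: "x \<in> {\<theta>0..<pi/2} \<Longrightarrow> deriv (G \<theta>0 \<kappa>) x * tan x - G \<theta>0 \<kappa> x = Z x"
  using DERIV_imp_deriv[OF G_deriv] cos_diff_\<theta>0_pos unfolding Z_def by auto

lemma Z_deriv: assumes "\<theta>0 \<le> x" "x < pi/2" shows "(Z has_real_derivative Z' x) (at x)"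
proof -
  have c0: "cos (x - \<theta>0) > 0" using assms by (intro cos_diff_\<theta>0_pos) auto
  have c: "cos x > 0" using assms \<theta>0 by (intro cos_gt_zero_pi) auto
  have dA: "((\<lambda>x. A (cos (x - \<theta>0))) has_real_derivative A' (cos (x - \<theta>0)) * (- sin (x - \<theta>0) * 1)) (at x)"
    by (rule DERIV_chain2[where f = A and g = "\<lambda>x. cos (x - \<theta>0)", OF A_deriv[OF c0]])
       (auto intro!: derivative_eq_intros)
  have dtan: "(tan has_real_derivative 1 + (tan x)\<^sup>2) (at x)"
    using DERIV_tan[of x] c
    by (simp add: tan_def power2_eq_square divide_simps sin_squared_eq)
  show ?thesis
    unfolding Z_def
    by (rule dA dtan G_deriv[OF c0] derivative_eq_intros refl)+
       (simp add: Z'_def algebra_simps power2_eq_square)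
qed

lemma Z'_neg: assumes "\<theta>0 < x" "x < pi/2" shows "Z' x < 0"
proof -
  have c: "cos (x - \<theta>0) > 0" using cos_diff_\<theta>0_pos assms by auto
  have s: "sin (x - \<theta>0) > 0" using assms \<theta>0 by (intro sin_gt_zero2) auto
  have tn: "tan x > 0" using assms \<theta>0 by (intro tan_gt_zero) auto
  have "A' (cos (x - \<theta>0)) * (sin (x - \<theta>0))\<^sup>2 * tan x < 0"
    using A'_neg[OF c] s tn by (simp add: mult_neg_pos)
  moreover have "A (cos (x - \<theta>0)) * cos (x - \<theta>0) * tan x > 0"
    using A_pos[OF c] c tn by simp
  moreover have "A (cos (x - \<theta>0)) * sin (x - \<theta>0) * (tan x)\<^sup>2 > 0"
    using A_pos[OF c] s tn by simp
  ultimately show ?thesis unfolding Z'_def by linarith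
qed

lemma Z_continuous_on: "b < pi/2 \<Longrightarrow> continuous_on {\<theta>0..b} Z"
  by (intro continuous_at_imp_continuous_on ballI DERIV_isCont[OF Z_deriv]) auto

lemma Z_strict_antimono: assumes "\<theta>0 \<le> a" "a < b" "b < pi/2" shows "Z b < Z a"
  using DERIV_neg_imp_decreasing_open[of a b Z] assms Z_deriv Z'_neg
    continuous_on_subset[OF Z_continuous_on[of b]]
  by (smt (verit, ccfv_SIG) atLeastatMost_subset_iff)

lemma Z_at_\<theta>0: "Z \<theta>0 = exp (-\<kappa>) - 1"
  unfolding Z_def G_def by simp

lemma Z_le: assumes "\<theta>0 \<le> x" "x < pi/2" shows "Z x \<le> exp (-\<kappa>) - 1"
  using Z_strict_antimono[of \<theta>0 x] Z_at_\<theta>0 assms by (cases "x = \<theta>0") auto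

lemma Z_inj: assumes "x \<in> {\<theta>0..<pi/2}" "y \<in> {\<theta>0..<pi/2}" "Z x = Z y" shows "x = y"
  using Z_strict_antimono[of x y] Z_strict_antimono[of y x] assms by (cases x y rule: linorder_cases) auto

lemma Z_unbounded_below: "\<exists>x\<in>{\<theta>0..<pi/2}. Z x \<le> z"
proof -
  define m where "m = (\<theta>0 + pi/2)/2"
  have m: "\<theta>0 < m" "m < pi/2" using \<theta>0 unfolding m_def by auto
  define K where "K = A (cos (m - \<theta>0)) * sin (m - \<theta>0)"
  have cm: "cos (m - \<theta>0) > 0" using cos_diff_\<theta>0_pos m by auto
  have sm: "sin (m - \<theta>0) > 0" using m \<theta>0 by (intro sin_gt_zero2) auto
  have K: "K > 0" unfolding K_def using A_pos[OF cm] sm by simp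
  \<comment> \<open>beyond \<open>m\<close>, \<open>Z(x) \<le> -K tan x\<close>\<close>
  define y where "y = max (-z/K) (tan m)"
  define x where "x = arctan y"
  have xl: "x < pi/2" unfolding x_def by (rule arctan_ubound)
  have "arctan (tan m) = m" using m \<theta>0 by (intro arctan_tan) auto
  then have xm: "m \<le> x" unfolding x_def y_def by (metis arctan_monotone' max.cobounded2)
  have tx: "tan x = y" unfolding x_def by (rule tan_arctan)
  have ty: "y > 0" unfolding y_def using m \<theta>0 tan_gt_zero[of m] by (simp add: less_max_iff_disj)
  have cx: "cos (x - \<theta>0) > 0" using cos_diff_\<theta>0_pos xm xl m by auto
  have "cos (x - \<theta>0) \<le> cos (m - \<theta>0)" using xm xl m \<theta>0 by (intro cos_monotone_0_pi_le) auto
  then have a: "A (cos (x - \<theta>0)) \<ge> A (cos (m - \<theta>0))" using A_antimono cx by blast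
  have b: "sin (x - \<theta>0) \<ge> sin (m - \<theta>0)" using xm xl m \<theta>0 by (intro sin_monotone_2pi_le) auto
  have "K \<le> A (cos (x - \<theta>0)) * sin (x - \<theta>0)"
    unfolding K_def using a b A_pos[OF cm] sm by (intro mult_mono) auto
  then have "K * y \<le> A (cos (x - \<theta>0)) * sin (x - \<theta>0) * tan x"
    using ty tx by (simp add: mult_right_mono)
  moreover have "- z \<le> K * y" using K unfolding y_def
    by (smt (verit, best) divide_le_eq max.cobounded1 mult.commute)
  moreover have "G \<theta>0 \<kappa> x \<ge> 0" using G_nonneg xm xl m by auto
  ultimately have "Z x \<le> z" unfolding Z_def by linarith
  then show ?thesis using xm xl m by auto
qed

lemma phi_in_range_and_Z_phi:
  assumes "z \<le> exp (-\<kappa>) - 1"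
  shows "phi \<theta>0 \<kappa> z \<in> {\<theta>0..<pi/2}" "Z (phi \<theta>0 \<kappa> z) = z"
proof -
  obtain b where b: "b \<in> {\<theta>0..<pi/2}" "Z b \<le> z" using Z_unbounded_below by blast
  then obtain x where "\<theta>0 \<le> x" "x \<le> b" "Z x = z"
    using assms Z_at_\<theta>0 IVT2'[of Z b z \<theta>0] Z_continuous_on[of b] by auto
  with b have "\<exists>!x. x \<in> {\<theta>0..<pi/2} \<and> deriv (G \<theta>0 \<kappa>) x * tan x - G \<theta>0 \<kappa> x = z"
    using deriv_G_tan_minus_G Z_inj by (metis atLeastLessThan_iff order.strict_trans1)
  from theI'[OF this] show "phi \<theta>0 \<kappa> z \<in> {\<theta>0..<pi/2}" "Z (phi \<theta>0 \<kappa> z) = z"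
    unfolding phi_def[symmetric] using deriv_G_tan_minus_G by auto
qed

lemma phi_Z: assumes "x \<in> {\<theta>0..<pi/2}" shows "phi \<theta>0 \<kappa> (Z x) = x"
  using phi_in_range_and_Z_phi[of "Z x"] Z_le[of x] Z_inj[of "phi \<theta>0 \<kappa> (Z x)" x] assms by auto

lemma phi_at_max: "phi \<theta>0 \<kappa> (exp (-\<kappa>) - 1) = \<theta>0"
  using phi_Z[of \<theta>0] Z_at_\<theta>0 \<theta>0 by auto

lemma phi_antimono: assumes "z1 \<le> z2" "z2 \<le> exp (-\<kappa>) - 1" shows "phi \<theta>0 \<kappa> z2 \<le> phi \<theta>0 \<kappa> z1"
proof (rule ccontr)
  assume "\<not> ?thesis"
  then have "Z (phi \<theta>0 \<kappa> z2) < Z (phi \<theta>0 \<kappa> z1)"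
    using Z_strict_antimono phi_in_range_and_Z_phi assms by (metis atLeastLessThan_iff linorder_not_le order.trans)
  then show False using phi_in_range_and_Z_phi assms by auto
qed

lemma phi_continuous_on: assumes "a \<le> exp (-\<kappa>) - 1" shows "continuous_on {a..exp (-\<kappa>) - 1} (phi \<theta>0 \<kappa>)"
proof -
  obtain b where b: "b \<in> {\<theta>0..<pi/2}" "Z b \<le> a" using Z_unbounded_below by blast
  have "continuous_on (Z ` {\<theta>0..b}) (phi \<theta>0 \<kappa>)"
    using b by (intro continuous_on_inv Z_continuous_on) (auto intro!: phi_Z)
  moreover have "{a..exp (-\<kappa>) - 1} \<subseteq> Z ` {\<theta>0..b}"
  proof
    fix z assume z: "z \<in> {a..exp (-\<kappa>) - 1}"
    have p: "phi \<theta>0 \<kappa> z \<in> {\<theta>0..<pi/2}" "Z (phi \<theta>0 \<kappa> z) = z" using phi_in_range_and_Z_phi z by auto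
    have "phi \<theta>0 \<kappa> z \<le> b"
    proof (rule ccontr)
      assume "\<not> ?thesis"
      then have "Z (phi \<theta>0 \<kappa> z) < Z b" using Z_strict_antimono[of b "phi \<theta>0 \<kappa> z"] b p by auto
      then show False using p b z by auto
    qed
    then show "z \<in> Z ` {\<theta>0..b}" using p by (metis atLeastAtMost_iff atLeastLessThan_iff image_eqI)
  qed
  ultimately show ?thesis using continuous_on_subset by blast
qed

lemma lagrangian_deriv:
  assumes "\<theta>0 \<le> x" "x < pi/2"
  shows "((\<lambda>x. q * g \<theta>0 \<kappa> x - \<mu> / sin x) has_real_derivative (cos x / (sin x)\<^sup>2 * (q * Z x + \<mu>))) (at x)"
proof -
  have s: "sin x > 0" using sin_pos assms by auto
  have c: "cos x > 0" using assms \<theta>0 by (intro cos_gt_zero_pi) auto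
  have dG: "(G \<theta>0 \<kappa> has_real_derivative (- A (cos (x - \<theta>0)) * sin (x - \<theta>0))) (at x)"
    using G_deriv cos_diff_\<theta>0_pos assms by auto
  have d: "((\<lambda>x. q * (G \<theta>0 \<kappa> x / sin x) - \<mu> / sin x) has_real_derivative
     (q * (((- A (cos (x - \<theta>0)) * sin (x - \<theta>0)) * sin x - G \<theta>0 \<kappa> x * cos x) / (sin x * sin x))
      - (0 * sin x - \<mu> * cos x) / (sin x * sin x))) (at x)"
    using s by (intro DERIV_diff DERIV_cmult DERIV_divide dG DERIV_sin DERIV_const) auto
  have e: "(- A (cos (x - \<theta>0)) * sin (x - \<theta>0)) * sin x - G \<theta>0 \<kappa> x * cos x = cos x * Z x"
    using c unfolding Z_def tan_def by (simp add: field_simps)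
  have "q * (((- A (cos (x - \<theta>0)) * sin (x - \<theta>0)) * sin x - G \<theta>0 \<kappa> x * cos x) / (sin x * sin x))
      - (0 * sin x - \<mu> * cos x) / (sin x * sin x) = cos x / (sin x)\<^sup>2 * (q * Z x + \<mu>)"
    unfolding e using s by (simp add: field_simps power2_eq_square)
  with d show ?thesis unfolding g_def by simp
qed

lemma lagrangian_lt_at_phi:
  assumes q: "q > 0" and zq: "-\<mu>/q \<le> exp (-\<kappa>) - 1" and x: "x \<in> {\<theta>0..pi/2}"
    and nx: "x \<noteq> phi \<theta>0 \<kappa> (-\<mu>/q)"
  shows "q * g \<theta>0 \<kappa> x - \<mu> / sin x < q * g \<theta>0 \<kappa> (phi \<theta>0 \<kappa> (-\<mu>/q)) - \<mu> / sin (phi \<theta>0 \<kappa> (-\<mu>/q))"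
proof -
  define p where "p = phi \<theta>0 \<kappa> (-\<mu>/q)"
  define F where "F = (\<lambda>x. q * g \<theta>0 \<kappa> x - \<mu> / sin x)"
  have p: "p \<in> {\<theta>0..<pi/2}" "Z p = -\<mu>/q" using phi_in_range_and_Z_phi zq unfolding p_def by auto
  have Fc: "continuous_on {a..b} F" if "\<theta>0 \<le> a" "b \<le> pi/2" for a b
    unfolding F_def g_def using that sin_pos
    by (intro continuous_intros continuous_on_subset[OF G_continuous_on]) (auto simp: less_imp_neq[THEN not_sym])
  \<comment> \<open>the sign of \<open>F'\<close> is that of \<open>q Z + \<mu> = q (Z - Z(p))\<close>\<close>
  have F': "DERIV F y :> cos y / (sin y)\<^sup>2 * (q * (Z y - Z p))" "cos y / (sin y)\<^sup>2 > 0"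
    if "\<theta>0 \<le> y" "y < pi/2" for y
    using lagrangian_deriv[OF that, of q \<mu>] p q sin_pos[of y] that \<theta>0 cos_gt_zero_pi[of y]
    unfolding F_def by (auto simp: algebra_simps)
  have "F x < F p"
  proof (cases "x < p")
    case True
    show ?thesis
    proof (rule DERIV_pos_imp_increasing_open[OF True _ Fc])
      fix y assume y: "x < y" "y < p"
      then have "q * (Z y - Z p) > 0" using Z_strict_antimono[of y p] x p q by auto
      moreover have "DERIV F y :> cos y / (sin y)\<^sup>2 * (q * (Z y - Z p))" "cos y / (sin y)\<^sup>2 > 0"
        using F' y x p by auto
      ultimately show "\<exists>D. DERIV F y :> D \<and> D > 0" by (meson mult_pos_pos)
    qed (use x p in auto)
  next
    case False
    then have xp: "p < x" using nx unfolding p_def by auto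
    show ?thesis
    proof (rule DERIV_neg_imp_decreasing_open[OF xp _ Fc])
      fix y assume y: "p < y" "y < x"
      then have "q * (Z y - Z p) < 0" using Z_strict_antimono[of p y] x p q by (auto simp: mult_pos_neg)
      moreover have "DERIV F y :> cos y / (sin y)\<^sup>2 * (q * (Z y - Z p))" "cos y / (sin y)\<^sup>2 > 0"
        using F' y x p by auto
      ultimately show "\<exists>D. DERIV F y :> D \<and> D < 0" by (meson mult_pos_neg)
    qed (use x p in auto)
  qed
  then show ?thesis unfolding F_def p_def .
qed

lemma scaled_g_le:
  assumes "0 < e" "e \<le> 1" "\<theta>0 \<le> x" "x \<le> pi/2"
  shows "e * g \<theta>0 \<kappa> x \<le> (1 - exp (-\<kappa>)) / sin x - (1 - exp (-\<kappa>)) * (1 - e)"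
proof -
  define l where "l = 1 - exp (-\<kappa>)"
  have s: "0 < sin x" "sin x \<le> 1" using sin_pos assms by auto
  have l: "0 \<le> l" unfolding l_def using \<kappa> by simp
  \<comment> \<open>\<open>e G \<le> e l = l - l (1 - e) \<le> l - l (1 - e) sin x\<close>, then divide by \<open>sin x\<close>\<close>
  have "e * G \<theta>0 \<kappa> x \<le> e * l"
    using G_le assms unfolding l_def by (intro mult_left_mono) auto
  moreover have "l * (1 - e) * sin x \<le> l * (1 - e)"
    using l assms s by (intro mult_left_le) auto
  ultimately have "e * G \<theta>0 \<kappa> x \<le> l - l * (1 - e) * sin x"
    by (simp add: algebra_simps)
  then show ?thesis using s unfolding g_def l_def[symmetric] by (simp add: field_simps)
qed

end

section \<open>An equilibrium follows the pointwise maximiser\<close>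

locale equilibrium = model_constants +
  fixes L \<rho> :: real and I \<theta>star :: "real \<Rightarrow> real" and h :: real
  assumes \<rho>: "\<rho> > 0"
    and equilibrium: "competitive_equilibrium \<theta>0 L \<kappa> \<rho> I h \<theta>star"
begin

lemma feasible: "OP1_feasible \<theta>0 L h \<theta>star"
  and optimal: "OP1_feasible \<theta>0 L h' \<theta>' \<Longrightarrow> OP1_value \<theta>0 \<kappa> I h' \<theta>' \<le> OP1_value \<theta>0 \<kappa> I h \<theta>star"
  and I_eq: "y \<ge> 0 \<Longrightarrow> I y = exp (- \<rho> * integral {min y h..h} (\<lambda>\<eta>. \<kappa> / sin (\<theta>star \<eta>)))"
  using equilibrium unfolding competitive_equilibrium_def OP1_optimal_def by auto

lemma h_pos: "h > 0"
  and \<theta>star_measurable: "\<theta>star \<in> borel_measurable (lebesgue_on {0..h})"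
  and \<theta>star_range: "y \<in> {0..h} \<Longrightarrow> \<theta>star y \<in> {\<theta>0..pi/2}"
  and inverse_sin_\<theta>star_integrable: "(\<lambda>y. 1 / sin (\<theta>star y)) integrable_on {0..h}"
  and length_\<theta>star: "integral {0..h} (\<lambda>y. 1 / sin (\<theta>star y)) = L"
  using feasible unfolding OP1_feasible_def by auto

lemma inverse_sin_\<theta>star_integrable_on: "{a..b} \<subseteq> {0..h} \<Longrightarrow> (\<lambda>y. 1 / sin (\<theta>star y)) integrable_on {a..b}"
  using integrable_on_subinterval[OF inverse_sin_\<theta>star_integrable] by blast

lemma inverse_sin_\<theta>star_bounds:
  assumes "y \<in> {0..h}" shows "1 \<le> 1 / sin (\<theta>star y)" "1 / sin (\<theta>star y) \<le> 1 / sin \<theta>0"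
  using inverse_sin_bounds \<theta>star_range[OF assms] by auto

text \<open>Clamping the lower limit to \<open>[0, h]\<close> makes \<open>J\<close> continuous on all of \<open>\<real>\<close>.\<close>

definition J :: "real \<Rightarrow> real" where
  "J y = integral {max 0 (min y h)..h} (\<lambda>\<eta>. \<kappa> / sin (\<theta>star \<eta>))"

lemma J_continuous: "continuous_on UNIV J"
proof -
  have "(\<lambda>\<eta>. \<kappa> / sin (\<theta>star \<eta>)) integrable_on {0..h}"
    using integrable_on_cmult_left[OF inverse_sin_\<theta>star_integrable, of \<kappa>] by simp
  then have "continuous_on {0..h} (\<lambda>x. integral {x..h} (\<lambda>\<eta>. \<kappa> / sin (\<theta>star \<eta>)))"
    by (rule indefinite_integral_continuous_1')
  moreover have "continuous_on UNIV (\<lambda>y. max 0 (min y h))" by (intro continuous_intros)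
  moreover have "(\<lambda>y. max 0 (min y h)) ` UNIV \<subseteq> {0..h}" using h_pos by auto
  ultimately show ?thesis unfolding J_def by (rule continuous_on_compose2)
qed

lemma J_lower_bound: assumes "y \<in> {0..h}" shows "\<kappa> * (h - y) \<le> J y"
proof -
  have "integral {y..h} (\<lambda>\<eta>. \<kappa> * 1) \<le> integral {y..h} (\<lambda>\<eta>. \<kappa> * (1 / sin (\<theta>star \<eta>)))"
    using assms inverse_sin_\<theta>star_bounds \<kappa>
    by (intro integral_le integrable_on_mult_right inverse_sin_\<theta>star_integrable_on mult_left_mono) auto
  then show ?thesis unfolding J_def using assms by (simp add: mult.commute)
qed

lemma J_bounds: "0 \<le> J y" "J y \<le> \<kappa> * h / sin \<theta>0"
proof -
  define c where "c = max 0 (min y h)"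
  have c: "c \<in> {0..h}" unfolding c_def using h_pos by auto
  have int: "(\<lambda>\<eta>. \<kappa> * (1 / sin (\<theta>star \<eta>))) integrable_on {c..h}"
    using c by (intro integrable_on_mult_right inverse_sin_\<theta>star_integrable_on) auto
  have "0 \<le> \<kappa> * (h - c)" using c \<kappa> by simp
  then show "0 \<le> J y" using J_lower_bound[OF c] c unfolding J_def c_def[symmetric] by simp
  have "integral {c..h} (\<lambda>\<eta>. \<kappa> * (1 / sin (\<theta>star \<eta>))) \<le> integral {c..h} (\<lambda>\<eta>. \<kappa> * (1 / sin \<theta>0))"
    using c inverse_sin_\<theta>star_bounds \<kappa> by (intro integral_le int mult_left_mono) auto
  also have "\<dots> = (h - c) * (\<kappa> / sin \<theta>0)" using c by simp
  also have "\<dots> \<le> h * (\<kappa> / sin \<theta>0)"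
    using c \<kappa> sin_pos[of \<theta>0] \<theta>0 by (intro mult_right_mono) auto
  also have "\<dots> = \<kappa> * h / sin \<theta>0" by simp
  finally show "J y \<le> \<kappa> * h / sin \<theta>0" unfolding J_def c_def[symmetric] by simp
qed

lemma J_eq_0: "y \<ge> h \<Longrightarrow> J y = 0"
  unfolding J_def using h_pos by simp

lemma I_eq_exp_J: "y \<ge> 0 \<Longrightarrow> I y = exp (- \<rho> * J y)"
  using I_eq h_pos unfolding J_def by (simp add: min_def)

lemma I_bounds: "y \<ge> 0 \<Longrightarrow> 0 < I y" "y \<ge> 0 \<Longrightarrow> I y \<le> 1"
  using I_eq_exp_J J_bounds \<rho> by auto

lemma I_eq_1: "y \<ge> h \<Longrightarrow> I y = 1"
  using I_eq_exp_J J_eq_0 h_pos by simp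

text \<open>The multiplier of the length constraint; it equals \<open>G(\<theta>0)\<close>.\<close>

definition lam :: real where "lam = 1 - exp (-\<kappa>)"

definition T :: "real \<Rightarrow> real" where "T y = phi \<theta>0 \<kappa> ((exp (-\<kappa>) - 1) * exp (\<rho> * J y))"

lemma lam_pos: "lam > 0" unfolding lam_def using \<kappa> by simp

lemma phi_arg_bounds:
  "(exp (-\<kappa>) - 1) * exp (\<rho> * (\<kappa> * h / sin \<theta>0)) \<le> (exp (-\<kappa>) - 1) * exp (\<rho> * J y)"
  "(exp (-\<kappa>) - 1) * exp (\<rho> * J y) \<le> exp (-\<kappa>) - 1"
proof -
  have "0 \<le> \<rho> * J y" "\<rho> * J y \<le> \<rho> * (\<kappa> * h / sin \<theta>0)"
    using mult_left_mono[OF J_bounds(2)[of y], of \<rho>] J_bounds(1)[of y] \<rho> by auto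
  then show "(exp (-\<kappa>) - 1) * exp (\<rho> * (\<kappa> * h / sin \<theta>0)) \<le> (exp (-\<kappa>) - 1) * exp (\<rho> * J y)"
    "(exp (-\<kappa>) - 1) * exp (\<rho> * J y) \<le> exp (-\<kappa>) - 1"
    using \<kappa> by (auto simp: mult_left_mono_neg)
qed

lemma T_continuous: "continuous_on UNIV T"
  unfolding T_def using phi_arg_bounds
  by (intro continuous_on_compose2[OF phi_continuous_on[OF order_trans[OF phi_arg_bounds]]]
      continuous_intros J_continuous) auto

lemma T_range: "T y \<in> {\<theta>0..<pi/2}"
  unfolding T_def using phi_in_range_and_Z_phi phi_arg_bounds by blast

lemma T_eq_\<theta>0: "y \<ge> h \<Longrightarrow> T y = \<theta>0"
  unfolding T_def using J_eq_0 phi_at_max by simp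

lemma minus_lam_div_I: "y \<ge> 0 \<Longrightarrow> - lam / I y = (exp (-\<kappa>) - 1) * exp (\<rho> * J y)"
  unfolding lam_def using I_eq_exp_J by (simp add: exp_minus divide_inverse)

lemma lagrangian_lt_T:
  assumes "y \<ge> 0" "x \<in> {\<theta>0..pi/2}" "x \<noteq> T y"
  shows "I y * g \<theta>0 \<kappa> x - lam / sin x < I y * g \<theta>0 \<kappa> (T y) - lam / sin (T y)"
proof -
  have T: "T y = phi \<theta>0 \<kappa> (- lam / I y)" unfolding T_def minus_lam_div_I[OF assms(1)] ..
  have "- lam / I y \<le> exp (-\<kappa>) - 1"
    unfolding minus_lam_div_I[OF assms(1)] by (rule phi_arg_bounds(2))
  from lagrangian_lt_at_phi[OF I_bounds(1)[OF assms(1)] this assms(2)] show ?thesis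
    using assms(3) unfolding T by simp
qed

lemma lagrangian_le_T:
  assumes "y \<ge> 0" "x \<in> {\<theta>0..pi/2}"
  shows "I y * g \<theta>0 \<kappa> x - lam / sin x \<le> I y * g \<theta>0 \<kappa> (T y) - lam / sin (T y)"
  using lagrangian_lt_T[OF assms] by (cases "x = T y") auto

lemma sin_T_pos: "0 < sin (T y)"
  using sin_pos T_range[of y] by auto

lemma inverse_sin_T_continuous: "continuous_on UNIV (\<lambda>y. 1 / sin (T y))"
  using sin_T_pos by (intro continuous_intros T_continuous) (simp add: less_imp_neq[THEN not_sym])

lemma inverse_sin_T_integrable: "(\<lambda>y. 1 / sin (T y)) integrable_on {a..b}"
  by (rule integrable_continuous_interval[OF continuous_on_subset[OF inverse_sin_T_continuous]]) auto

lemma I_g_T_integrable: "0 \<le> a \<Longrightarrow> (\<lambda>y. I y * g \<theta>0 \<kappa> (T y)) integrable_on {a..b}"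
proof -
  have "T ` UNIV \<subseteq> {\<theta>0..pi/2}" using T_range by fastforce
  then have "continuous_on UNIV (\<lambda>y. G \<theta>0 \<kappa> (T y))"
    by (intro continuous_on_compose2[OF G_continuous_on T_continuous])
  then have "continuous_on UNIV (\<lambda>y. exp (- \<rho> * J y) * (G \<theta>0 \<kappa> (T y) / sin (T y)))"
    by (intro continuous_intros J_continuous T_continuous)
       (auto simp: sin_T_pos[THEN less_imp_neq, THEN not_sym])
  then show "0 \<le> a \<Longrightarrow> ?thesis"
    by (intro integrable_eq[OF integrable_continuous_interval[OF continuous_on_subset]])
       (auto simp: I_eq_exp_J g_def)
qed

lemma I_g_\<theta>star_integrable:
  assumes "{a..b} \<subseteq> {0..h}" shows "(\<lambda>y. I y * g \<theta>0 \<kappa> (\<theta>star y)) integrable_on {a..b}"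
proof -
  have "(\<lambda>y. exp (- \<rho> * J y)) \<in> borel_measurable (lebesgue_on {a..b})"
    by (intro continuous_imp_measurable_on_sets_lebesgue continuous_on_subset[OF continuous_on_exp])
       (auto intro!: continuous_intros J_continuous)
  moreover have "\<theta>star \<in> borel_measurable (lebesgue_on {a..b})"
    using measurable_restrict_mono[OF \<theta>star_measurable assms] .
  then have "(\<lambda>y. g \<theta>0 \<kappa> (\<theta>star y)) \<in> borel_measurable (lebesgue_on {a..b})"
    unfolding g_def G_def by measurable
  ultimately have m: "(\<lambda>y. exp (- \<rho> * J y) * g \<theta>0 \<kappa> (\<theta>star y)) \<in> borel_measurable (lebesgue_on {a..b})"
    by (rule borel_measurable_times)
  have "(\<lambda>y. exp (- \<rho> * J y) * g \<theta>0 \<kappa> (\<theta>star y)) integrable_on {a..b}"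
  proof (rule measurable_bounded_by_integrable_imp_integrable[OF m])
    fix y assume y: "y \<in> {a..b}"
    then have "0 \<le> g \<theta>0 \<kappa> (\<theta>star y)" "g \<theta>0 \<kappa> (\<theta>star y) \<le> lam / sin \<theta>0"
      using g_bounds \<theta>star_range assms unfolding lam_def by auto
    moreover have "0 < exp (- \<rho> * J y)" "exp (- \<rho> * J y) \<le> 1" using J_bounds \<rho> by auto
    ultimately show "norm (exp (- \<rho> * J y) * g \<theta>0 \<kappa> (\<theta>star y)) \<le> lam / sin \<theta>0"
      using mult_mono[of "exp (- \<rho> * J y)" 1 "g \<theta>0 \<kappa> (\<theta>star y)" "lam / sin \<theta>0"] by simp
  qed auto
  then show ?thesis
    by (rule integrable_eq) (use assms I_eq_exp_J in auto)
qed

lemma T_measurable: "S \<in> sets lebesgue \<Longrightarrow> T \<in> borel_measurable (lebesgue_on S)"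
  using continuous_imp_measurable_on_sets_lebesgue[OF continuous_on_subset[OF T_continuous]] by simp

definition length_T :: real where "length_T = integral {0..h} (\<lambda>y. 1 / sin (T y))"

lemma AE_eq_T_if_lagrangian_le:
  assumes "integral {0..h} (\<lambda>y. I y * g \<theta>0 \<kappa> (T y)) - lam * length_T \<le> OP1_value \<theta>0 \<kappa> I h \<theta>star - lam * L"
  shows "AE y in lebesgue. y \<in> {0..h} \<longrightarrow> \<theta>star y = T y"
proof -
  define N where "N y = (I y * g \<theta>0 \<kappa> (T y) - lam * (1 / sin (T y)))
    - (I y * g \<theta>0 \<kappa> (\<theta>star y) - lam * (1 / sin (\<theta>star y)))" for y
  have N_pos: "0 < N y" if "y \<in> {0..h}" "\<theta>star y \<noteq> T y" for y
    using lagrangian_lt_T \<theta>star_range that unfolding N_def by auto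
  have N_nonneg: "0 \<le> N y" if "y \<in> {0..h}" for y
    using lagrangian_le_T \<theta>star_range that unfolding N_def by auto
  have iA: "(\<lambda>y. I y * g \<theta>0 \<kappa> (T y)) integrable_on {0..h}" by (rule I_g_T_integrable) simp
  have iC: "(\<lambda>y. I y * g \<theta>0 \<kappa> (\<theta>star y)) integrable_on {0..h}" by (rule I_g_\<theta>star_integrable) simp
  have iP: "(\<lambda>y. lam * (1 / sin (T y))) integrable_on {0..h}"
    by (rule integrable_on_mult_right[OF inverse_sin_T_integrable])
  have iQ: "(\<lambda>y. lam * (1 / sin (\<theta>star y))) integrable_on {0..h}"
    by (rule integrable_on_mult_right[OF inverse_sin_\<theta>star_integrable])
  have N_int: "N integrable_on {0..h}" unfolding N_def by (intro integrable_diff iA iC iP iQ)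
  have "integral {0..h} N = (integral {0..h} (\<lambda>y. I y * g \<theta>0 \<kappa> (T y)) - lam * length_T)
      - (OP1_value \<theta>0 \<kappa> I h \<theta>star - lam * L)"
    unfolding N_def OP1_value_def length_T_def
    by (simp only: integral_diff integrable_diff iA iC iP iQ integral_mult_right length_\<theta>star)
  then have "integral {0..h} N = 0"
    using assms integral_nonneg[OF N_int N_nonneg] by linarith
  then have "AE y in lebesgue. y \<in> {0..h} \<longrightarrow> N y = 0"
    using AE_eq_0_if_integral_eq_0[OF N_int] N_nonneg by blast
  then show ?thesis
    by (rule AE_mp) (use N_pos in \<open>auto intro!: AE_I2 simp: less_le\<close>)
qed

text \<open>Prolonging \<open>T\<close> by \<open>\<theta>0\<close> costs nothing in the Lagrangian, since \<open>I = 1\<close> beyond \<open>h\<close> and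
  \<open>g(\<theta>0) = lam / sin \<theta>0\<close>.\<close>

lemma AE_eq_T_if_length_T_le:
  assumes "length_T \<le> L" shows "AE y in lebesgue. y \<in> {0..h} \<longrightarrow> \<theta>star y = T y"
proof -
  define h' where "h' = h + (L - length_T) * sin \<theta>0"
  have s0: "sin \<theta>0 > 0" using sin_pos \<theta>0 by auto
  have hh: "h \<le> h'" unfolding h'_def using assms s0 by simp
  have on_ext: "T y = \<theta>0" "I y = 1" if "y \<in> {h..h'}" for y
    using T_eq_\<theta>0 I_eq_1 that by auto
  have ext_length: "integral {h..h'} (\<lambda>y. 1 / sin (T y)) = L - length_T"
  proof -
    have "integral {h..h'} (\<lambda>y. 1 / sin (T y)) = integral {h..h'} (\<lambda>y. 1 / sin \<theta>0)"
      by (rule Henstock_Kurzweil_Integration.integral_cong) (use on_ext in auto)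
    then show ?thesis using hh s0 unfolding h'_def by simp
  qed
  have ext_value: "integral {h..h'} (\<lambda>y. I y * g \<theta>0 \<kappa> (T y)) = lam * (L - length_T)"
  proof -
    have "integral {h..h'} (\<lambda>y. I y * g \<theta>0 \<kappa> (T y)) = integral {h..h'} (\<lambda>y. lam / sin \<theta>0)"
      by (rule Henstock_Kurzweil_Integration.integral_cong)
         (use on_ext in \<open>auto simp: g_def G_at_\<theta>0 lam_def\<close>)
    then show ?thesis using hh s0 unfolding h'_def by simp
  qed
  have "OP1_feasible \<theta>0 L h' T"
    unfolding OP1_feasible_def
  proof (intro conjI ballI)
    show "h' > 0" using hh h_pos by simp
    show "T \<in> borel_measurable (lebesgue_on {0..h'})" by (rule T_measurable) simp
    show "T y \<in> {\<theta>0..pi/2}" for y using T_range[of y] by auto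
    show "(\<lambda>y. 1 / sin (T y)) integrable_on {0..h'}" by (rule inverse_sin_T_integrable)
    show "integral {0..h'} (\<lambda>y. 1 / sin (T y)) = L"
      using Henstock_Kurzweil_Integration.integral_combine[OF less_imp_le[OF h_pos] hh inverse_sin_T_integrable]
        ext_length
      unfolding length_T_def by simp
  qed
  then have "OP1_value \<theta>0 \<kappa> I h' T \<le> OP1_value \<theta>0 \<kappa> I h \<theta>star" by (rule optimal)
  moreover have "OP1_value \<theta>0 \<kappa> I h' T = integral {0..h} (\<lambda>y. I y * g \<theta>0 \<kappa> (T y)) + lam * (L - length_T)"
    using Henstock_Kurzweil_Integration.integral_combine[OF less_imp_le[OF h_pos] hh I_g_T_integrable]
      ext_value
    unfolding OP1_value_def by simp
  ultimately show ?thesis by (intro AE_eq_T_if_lagrangian_le) (simp add: algebra_simps)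
qed

lemma exists_splice_point:
  assumes "L < length_T"
  obtains h' r where "0 < h'" "h' < h" "0 \<le> r" "r \<le> h'"
    "integral {0..r} (\<lambda>y. 1 / sin (T y) - 1 / sin (\<theta>star y)) = integral {h'..h} (\<lambda>y. 1 / sin (\<theta>star y))"
proof -
  define D where "D y = 1 / sin (T y) - 1 / sin (\<theta>star y)" for y
  define C where "C = 1 / sin \<theta>0"
  have C: "1 \<le> C" using inverse_sin_bounds[of \<theta>0] \<theta>0 unfolding C_def by auto
  have D_int: "D integrable_on {a..b}" if "{a..b} \<subseteq> {0..h}" for a b
    unfolding D_def using that by (intro integrable_diff inverse_sin_T_integrable inverse_sin_\<theta>star_integrable_on)
  have D_le: "D y \<le> C" if "y \<in> {0..h}" for y
    using inverse_sin_bounds[of "T y"] T_range[of y] inverse_sin_\<theta>star_bounds[OF that] unfolding D_def C_def by auto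
  define \<Delta> where "\<Delta> = length_T - L"
  have \<Delta>: "0 < \<Delta>" "integral {0..h} D = \<Delta>"
    using assms integral_diff[OF inverse_sin_T_integrable inverse_sin_\<theta>star_integrable] length_\<theta>star
    unfolding D_def \<Delta>_def length_T_def by auto
  \<comment> \<open>the final piece \<open>[h', h]\<close> is so short that its length \<open>b\<close> stays below \<open>integral {0..h'} D\<close>\<close>
  define \<epsilon> where "\<epsilon> = min (h/2) (\<Delta> / (2 * C))"
  have \<epsilon>: "\<epsilon> > 0" "\<epsilon> \<le> h/2" "\<epsilon> * C \<le> \<Delta> / 2"
    unfolding \<epsilon>_def using h_pos \<Delta> C by (auto simp: min_def field_simps)
  define h' where "h' = h - \<epsilon>"
  have h': "0 < h'" "h' < h" unfolding h'_def using \<epsilon> h_pos by auto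
  define b where "b = integral {h'..h} (\<lambda>y. 1 / sin (\<theta>star y))"
  have b: "\<epsilon> \<le> b" "b \<le> \<epsilon> * C"
  proof -
    have "integral {h'..h} (\<lambda>y. 1) \<le> b"
      unfolding b_def using inverse_sin_\<theta>star_bounds h'
      by (intro integral_le inverse_sin_\<theta>star_integrable_on) auto
    moreover have "b \<le> integral {h'..h} (\<lambda>y. C)"
      unfolding b_def C_def using inverse_sin_\<theta>star_bounds h'
      by (intro integral_le inverse_sin_\<theta>star_integrable_on) auto
    ultimately show "\<epsilon> \<le> b" "b \<le> \<epsilon> * C" using h' unfolding h'_def by auto
  qed
  have "integral {h'..h} D \<le> integral {h'..h} (\<lambda>y. C)"
    using D_le h' by (intro integral_le D_int) auto
  moreover have "integral {0..h'} D + integral {h'..h} D = integral {0..h} D"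
    using h' by (intro Henstock_Kurzweil_Integration.integral_combine D_int) auto
  ultimately have "b \<le> integral {0..h'} D" using \<Delta> b \<epsilon> h' unfolding h'_def by auto
  moreover have "continuous_on {0..h'} (\<lambda>x. integral {0..x} D)"
    using h' by (intro indefinite_integral_continuous_1 D_int) auto
  ultimately obtain r where "0 \<le> r" "r \<le> h'" "integral {0..r} D = b"
    using b \<epsilon> h' IVT'[of "\<lambda>x. integral {0..x} D" 0 b h'] by auto
  then show ?thesis using that h' unfolding D_def b_def by blast
qed

lemma spliced_feasible:
  assumes "0 < h'" "h' \<le> h" "0 \<le> r" "r \<le> h'"
    and "integral {0..r} (\<lambda>y. 1 / sin (T y) - 1 / sin (\<theta>star y)) = integral {h'..h} (\<lambda>y. 1 / sin (\<theta>star y))"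
  shows "OP1_feasible \<theta>0 L h' (\<lambda>y. if y \<le> r then T y else \<theta>star y)"
proof -
  let ?f = "\<lambda>y. 1 / sin (T y)" and ?g = "\<lambda>y. 1 / sin (\<theta>star y)"
  have e: "(\<lambda>y. 1 / sin (if y \<le> r then T y else \<theta>star y)) = (\<lambda>y. if y \<le> r then ?f y else ?g y)"
    by auto
  have split: "(\<lambda>y. if y \<le> r then ?f y else ?g y) integrable_on {0..h'}"
    "integral {0..h'} (\<lambda>y. if y \<le> r then ?f y else ?g y) = integral {0..r} ?f + integral {r..h'} ?g"
    using assms by (intro integral_if_le_split inverse_sin_T_integrable inverse_sin_\<theta>star_integrable_on; simp)+
  have "integral {0..r} ?f = integral {h'..h} ?g + integral {0..r} ?g"
    using assms integral_diff[OF inverse_sin_T_integrable inverse_sin_\<theta>star_integrable_on[of 0 r]] by auto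
  moreover have "integral {0..r} ?g + integral {r..h'} ?g + integral {h'..h} ?g = L"
    using assms length_\<theta>star
    by (simp add: Henstock_Kurzweil_Integration.integral_combine inverse_sin_\<theta>star_integrable_on
        inverse_sin_\<theta>star_integrable)
  ultimately have length: "integral {0..h'} (\<lambda>y. 1 / sin (if y \<le> r then T y else \<theta>star y)) = L"
    unfolding e split(2) by simp
  have "\<theta>star \<in> borel_measurable (lebesgue_on {0..h'})"
    using assms by (intro measurable_restrict_mono[OF \<theta>star_measurable]) auto
  then have "(\<lambda>y. if y \<le> r then T y else \<theta>star y) \<in> borel_measurable (lebesgue_on {0..h'})"
    using T_measurable[of "{0..h'}"] by (intro borel_measurable_if_le_lebesgue_on) auto
  then show ?thesis
    unfolding OP1_feasible_def using assms T_range \<theta>star_range split(1) length e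
    by (auto simp: less_imp_le)
qed

lemma spliced_value:
  assumes "0 \<le> r" "r \<le> h'" "h' \<le> h"
  shows "OP1_value \<theta>0 \<kappa> I h' (\<lambda>y. if y \<le> r then T y else \<theta>star y)
    = integral {0..r} (\<lambda>y. I y * g \<theta>0 \<kappa> (T y)) + integral {r..h'} (\<lambda>y. I y * g \<theta>0 \<kappa> (\<theta>star y))"
proof -
  have "(\<lambda>y. I y * g \<theta>0 \<kappa> (if y \<le> r then T y else \<theta>star y))
    = (\<lambda>y. if y \<le> r then I y * g \<theta>0 \<kappa> (T y) else I y * g \<theta>0 \<kappa> (\<theta>star y))"
    by auto
  moreover have "integral {0..h'} (\<lambda>y. if y \<le> r then I y * g \<theta>0 \<kappa> (T y) else I y * g \<theta>0 \<kappa> (\<theta>star y))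
    = integral {0..r} (\<lambda>y. I y * g \<theta>0 \<kappa> (T y)) + integral {r..h'} (\<lambda>y. I y * g \<theta>0 \<kappa> (\<theta>star y))"
    using assms by (intro integral_if_le_split(2) I_g_T_integrable I_g_\<theta>star_integrable) auto
  ultimately show ?thesis unfolding OP1_value_def by simp
qed

lemma lagrangian_gain_on_initial_segment:
  assumes "0 \<le> r" "r \<le> h"
  shows "lam * integral {0..r} (\<lambda>y. 1 / sin (T y) - 1 / sin (\<theta>star y))
    \<le> integral {0..r} (\<lambda>y. I y * g \<theta>0 \<kappa> (T y)) - integral {0..r} (\<lambda>y. I y * g \<theta>0 \<kappa> (\<theta>star y))"
proof -
  have iT: "(\<lambda>y. I y * g \<theta>0 \<kappa> (T y)) integrable_on {0..r}" by (rule I_g_T_integrable) simp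
  have iS: "(\<lambda>y. I y * g \<theta>0 \<kappa> (\<theta>star y)) integrable_on {0..r}" using assms by (intro I_g_\<theta>star_integrable) auto
  have iD: "(\<lambda>y. 1 / sin (T y) - 1 / sin (\<theta>star y)) integrable_on {0..r}"
    using assms by (intro integrable_diff inverse_sin_T_integrable inverse_sin_\<theta>star_integrable_on) auto
  have "integral {0..r} (\<lambda>y. lam * (1 / sin (T y) - 1 / sin (\<theta>star y)))
    \<le> integral {0..r} (\<lambda>y. I y * g \<theta>0 \<kappa> (T y) - I y * g \<theta>0 \<kappa> (\<theta>star y))"
  proof (rule integral_le[OF integrable_on_mult_right[OF iD] integrable_diff[OF iT iS]])
    fix y assume "y \<in> {0..r}"
    then show "lam * (1 / sin (T y) - 1 / sin (\<theta>star y)) \<le> I y * g \<theta>0 \<kappa> (T y) - I y * g \<theta>0 \<kappa> (\<theta>star y)"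
      using lagrangian_le_T[of y "\<theta>star y"] \<theta>star_range[of y] assms by (auto simp: algebra_simps)
  qed
  then show ?thesis using integral_diff[OF iT iS] integral_mult_right by simp
qed

lemma tail_deficit_pos:
  assumes "0 \<le> a" "a < h"
  shows "0 < integral {a..h} (\<lambda>y. 1 - I y)"
proof -
  define q where "q y = 1 - exp (- \<rho> * J y)" for y
  have q: "continuous_on {a..h} q" unfolding q_def by (intro continuous_intros continuous_on_subset[OF J_continuous]) auto
  have q_nonneg: "0 \<le> q y" for y unfolding q_def using J_bounds[of y] \<rho> by simp
  have "0 < \<kappa> * (h - a)" using \<kappa> assms by simp
  then have "0 < J a" using J_lower_bound[of a] assms by auto
  then have "q a \<noteq> 0" unfolding q_def using \<rho> by simp
  then have "integral {a..h} q \<noteq> 0" using integral_eq_0_iff[OF q assms(2)] q_nonneg assms by auto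
  moreover have "0 \<le> integral {a..h} q"
    using q_nonneg by (intro integral_nonneg integrable_continuous_interval[OF q]) auto
  moreover have "integral {a..h} (\<lambda>y. 1 - I y) = integral {a..h} q"
    unfolding q_def using assms by (intro Henstock_Kurzweil_Integration.integral_cong) (simp add: I_eq_exp_J)
  ultimately show ?thesis by simp
qed

lemma tail_value_le:
  assumes "0 \<le> a" "a \<le> h"
  shows "integral {a..h} (\<lambda>y. I y * g \<theta>0 \<kappa> (\<theta>star y))
    \<le> lam * integral {a..h} (\<lambda>y. 1 / sin (\<theta>star y)) - lam * integral {a..h} (\<lambda>y. 1 - I y)"
proof -
  have iS: "(\<lambda>y. I y * g \<theta>0 \<kappa> (\<theta>star y)) integrable_on {a..h}" using assms by (intro I_g_\<theta>star_integrable) auto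
  have ib: "(\<lambda>y. 1 / sin (\<theta>star y)) integrable_on {a..h}" using assms by (intro inverse_sin_\<theta>star_integrable_on) auto
  have "(\<lambda>y. 1 - exp (- \<rho> * J y)) integrable_on {a..h}"
    by (intro integrable_continuous_interval continuous_intros continuous_on_subset[OF J_continuous]) auto
  then have iq: "(\<lambda>y. 1 - I y) integrable_on {a..h}"
    by (rule integrable_eq) (use assms I_eq_exp_J in auto)
  have "integral {a..h} (\<lambda>y. I y * g \<theta>0 \<kappa> (\<theta>star y))
    \<le> integral {a..h} (\<lambda>y. lam * (1 / sin (\<theta>star y)) - lam * (1 - I y))"
  proof (rule integral_le[OF iS integrable_diff[OF integrable_on_mult_right[OF ib] integrable_on_mult_right[OF iq]]])
    fix y assume y: "y \<in> {a..h}"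
    then show "I y * g \<theta>0 \<kappa> (\<theta>star y) \<le> lam * (1 / sin (\<theta>star y)) - lam * (1 - I y)"
      using scaled_g_le[of "I y" "\<theta>star y"] I_bounds[of y] \<theta>star_range[of y] assms unfolding lam_def by auto
  qed
  also have "\<dots> = lam * integral {a..h} (\<lambda>y. 1 / sin (\<theta>star y)) - lam * integral {a..h} (\<lambda>y. 1 - I y)"
    by (simp only: integral_diff[OF integrable_on_mult_right[OF ib] integrable_on_mult_right[OF iq]]
        integral_mult_right)
  finally show ?thesis .
qed

lemma length_T_le: "length_T \<le> L"
proof (rule ccontr)
  assume "\<not> ?thesis"
  then have "L < length_T" by simp
  then obtain h' r where h': "0 < h'" "h' < h" and r: "0 \<le> r" "r \<le> h'"
    and splice: "integral {0..r} (\<lambda>y. 1 / sin (T y) - 1 / sin (\<theta>star y)) = integral {h'..h} (\<lambda>y. 1 / sin (\<theta>star y))"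
    by (rule exists_splice_point)
  let ?V = "\<lambda>a b. integral {a..b} (\<lambda>y. I y * g \<theta>0 \<kappa> (\<theta>star y))"
  have "OP1_value \<theta>0 \<kappa> I h' (\<lambda>y. if y \<le> r then T y else \<theta>star y) \<le> OP1_value \<theta>0 \<kappa> I h \<theta>star"
    using h' r splice by (intro optimal spliced_feasible) auto
  moreover have "?V 0 r + ?V r h' = ?V 0 h'" "?V 0 h' + ?V h' h = ?V 0 h"
    using h' r by (intro Henstock_Kurzweil_Integration.integral_combine I_g_\<theta>star_integrable; simp)+
  ultimately have "integral {0..r} (\<lambda>y. I y * g \<theta>0 \<kappa> (T y)) - ?V 0 r \<le> ?V h' h"
    using spliced_value[OF r less_imp_le[OF h'(2)]] unfolding OP1_value_def by linarith
  then have "lam * integral {h'..h} (\<lambda>y. 1 / sin (\<theta>star y)) \<le> ?V h' h"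
    using lagrangian_gain_on_initial_segment[of r] r h' splice by simp
  then have "lam * integral {h'..h} (\<lambda>y. 1 - I y) \<le> 0"
    using tail_value_le[of h'] h' by simp
  then show False using tail_deficit_pos[of h'] h' lam_pos by (simp add: mult_le_0_iff)
qed

lemma AE_eq_T: "AE y in lebesgue. y \<in> {0..h} \<longrightarrow> \<theta>star y = T y"
  by (rule AE_eq_T_if_length_T_le[OF length_T_le])

end

section \<open>Identification with the backward Cauchy problem\<close>

locale backward_solution = model_constants +
  fixes \<rho> :: real and \<zeta> :: "real \<Rightarrow> real"
  assumes \<rho>: "\<rho> > 0" and \<zeta>0: "\<zeta> 0 = 0"
    and \<zeta>_deriv: "\<And>t. t \<le> 0 \<Longrightarrow> (\<zeta> has_real_derivative
            (- \<rho> * \<kappa> / sin (phi \<theta>0 \<kappa> ((exp (-\<kappa>) - 1) * exp (\<zeta> t))))) (at t within {..0})"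
begin

definition F :: "real \<Rightarrow> real" where "F w = \<rho> * \<kappa> / sin (phi \<theta>0 \<kappa> ((exp (-\<kappa>) - 1) * exp w))"

lemma F_antimono: assumes "0 \<le> w1" "w1 \<le> w2" shows "F w2 \<le> F w1"
proof -
  have a: "(exp (-\<kappa>) - 1) * exp w2 \<le> (exp (-\<kappa>) - 1) * exp w1" "(exp (-\<kappa>) - 1) * exp w1 \<le> exp (-\<kappa>) - 1"
    using assms \<kappa> by (auto simp: mult_left_mono_neg)
  define p1 where "p1 = phi \<theta>0 \<kappa> ((exp (-\<kappa>) - 1) * exp w1)"
  define p2 where "p2 = phi \<theta>0 \<kappa> ((exp (-\<kappa>) - 1) * exp w2)"
  have "p1 \<le> p2" "p1 \<in> {\<theta>0..<pi/2}" "p2 \<in> {\<theta>0..<pi/2}"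
    unfolding p1_def p2_def using phi_antimono phi_in_range_and_Z_phi a by (blast, blast, meson order_trans)
  then have "sin p1 \<le> sin p2" "sin p1 > 0" using \<theta>0 sin_pos by (auto intro!: sin_monotone_2pi_le)
  then have "\<rho> * \<kappa> / sin p2 \<le> \<rho> * \<kappa> / sin p1" using \<rho> \<kappa> by (intro divide_left_mono) auto
  then show ?thesis unfolding F_def p1_def p2_def .
qed

lemma \<zeta>_nonneg: "t \<le> 0 \<Longrightarrow> 0 \<le> \<zeta> t"
proof (rule nonneg_if_deriv_neg_at_zeros[where \<zeta> = \<zeta>])
  show "continuous_on {..0} \<zeta>" using \<zeta>_deriv by (intro DERIV_continuous_on) auto
  fix s assume "s \<le> 0" "\<zeta> s = 0"
  then have "(\<zeta> has_real_derivative - \<rho> * \<kappa> / sin \<theta>0) (at s within {..0})"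
    using \<zeta>_deriv phi_at_max by fastforce
  moreover have "- \<rho> * \<kappa> / sin \<theta>0 < 0" using \<rho> \<kappa> sin_pos[of \<theta>0] \<theta>0 by (simp add: divide_neg_pos)
  ultimately show "\<exists>D<0. (\<zeta> has_real_derivative D) (at s within {..0})" by blast
qed (use \<zeta>0 in auto)

lemma phi_\<zeta>_range: "t \<le> 0 \<Longrightarrow> phi \<theta>0 \<kappa> ((exp (-\<kappa>) - 1) * exp (\<zeta> t)) \<in> {\<theta>0..<pi/2}"
  using phi_in_range_and_Z_phi(1) \<zeta>_nonneg \<kappa> by (simp add: mult_le_cancel_left1)

end

locale equilibrium_with_solution = equilibrium + backward_solution
begin

lemma rho_J_deriv:
  assumes "y \<in> {0..h}"
  shows "((\<lambda>y. \<rho> * J y) has_real_derivative - F (\<rho> * J y)) (at y within {0..h})"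
proof -
  define f where "f \<eta> = \<rho> * \<kappa> / sin (T \<eta>)" for \<eta>
  have f: "continuous_on UNIV f"
    unfolding f_def using sin_T_pos by (intro continuous_intros T_continuous) (simp add: less_imp_neq[THEN not_sym])
  \<comment> \<open>\<open>\<theta>star = T\<close> a.e., so \<open>\<rho> J\<close> is an integral of the continuous function \<open>f\<close>\<close>
  have "\<rho> * J x = integral {0..h} f - integral {0..x} f" if "x \<in> {0..h}" for x
  proof -
    have "integral {x..h} (\<lambda>\<eta>. \<kappa> / sin (\<theta>star \<eta>)) = integral {x..h} (\<lambda>\<eta>. \<kappa> / sin (T \<eta>))"
      by (rule integral_spike[OF negligible_if_AE_lebesgue[OF AE_eq_T]]) (use that in auto)
    then have "\<rho> * J x = \<rho> * integral {x..h} (\<lambda>\<eta>. \<kappa> / sin (T \<eta>))"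
      unfolding J_def using that by simp
    also have "\<dots> = integral {x..h} f" unfolding f_def by (simp flip: integral_mult_right)
    also have "\<dots> = integral {0..h} f - integral {0..x} f"
      using that Henstock_Kurzweil_Integration.integral_combine[of 0 x h f]
        integrable_continuous_interval[OF continuous_on_subset[OF f]] by auto
    finally show ?thesis .
  qed
  moreover have "((\<lambda>x. integral {0..h} f - integral {0..x} f) has_real_derivative 0 - f y) (at y within {0..h})"
    by (intro DERIV_diff DERIV_const integral_has_real_derivative continuous_on_subset[OF f] assms) auto
  moreover have "f y = F (\<rho> * J y)" unfolding f_def F_def T_def ..
  ultimately show ?thesis
    using has_field_derivative_transform_within[OF _ zero_less_one assms] by fastforce
qed

lemma shifted_\<zeta>_deriv:
  assumes "y \<in> {0..h}"
  shows "((\<lambda>y. \<zeta> (y - h)) has_real_derivative - F (\<zeta> (y - h))) (at y within {0..h})"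
proof -
  have "(\<zeta> has_real_derivative - F (\<zeta> (y - h))) (at (y - h) within {..0})"
    using \<zeta>_deriv[of "y - h"] assms unfolding F_def by simp
  then have "(\<zeta> has_real_derivative - F (\<zeta> (y - h))) (at ((\<lambda>y. y - h) y) within (\<lambda>y. y - h) ` {0..h})"
    by (rule has_field_derivative_subset) auto
  moreover have "((\<lambda>y. y - h) has_real_derivative 1) (at y within {0..h})"
    by (rule derivative_eq_intros refl)+ simp
  ultimately have "(\<zeta> \<circ> (\<lambda>y. y - h) has_real_derivative - F (\<zeta> (y - h)) * 1) (at y within {0..h})"
    by (rule DERIV_image_chain)
  then show ?thesis unfolding comp_def by simp
qed

lemma rho_J_eq_shifted_\<zeta>:
  assumes "y \<in> {0..h}" shows "\<rho> * J y = \<zeta> (y - h)"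
proof (rule antitone_ode_solutions_eq[where f = F and u = "\<lambda>y. \<rho> * J y" and v = "\<lambda>y. \<zeta> (y - h)"])
  show "y \<in> {0..h}" by (rule assms)
  show "((\<lambda>y. \<rho> * J y) has_real_derivative - F (\<rho> * J x)) (at x within {0..h})" if "x \<in> {0..h}" for x
    using rho_J_deriv[OF that] .
  show "((\<lambda>y. \<zeta> (y - h)) has_real_derivative - F (\<zeta> (x - h))) (at x within {0..h})" if "x \<in> {0..h}" for x
    using shifted_\<zeta>_deriv[OF that] .
  show "0 \<le> \<rho> * J x" for x using J_bounds \<rho> by simp
  show "0 \<le> \<zeta> (x - h)" if "x \<in> {0..h}" for x using \<zeta>_nonneg that by simp
  show "F w2 \<le> F w1" if "0 \<le> w1" "w1 \<le> w2" for w1 w2 using F_antimono that .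
  show "\<rho> * J h = \<zeta> (h - h)" using J_eq_0 \<zeta>0 by simp
qed

lemma T_eq_phi_\<zeta>: "y \<in> {0..h} \<Longrightarrow> T y = phi \<theta>0 \<kappa> ((exp (-\<kappa>) - 1) * exp (\<zeta> (y - h)))"
  unfolding T_def using rho_J_eq_shifted_\<zeta> by simp

lemma length_phi_\<zeta>: "integral {-h..0} (\<lambda>t. 1 / sin (phi \<theta>0 \<kappa> ((exp (-\<kappa>) - 1) * exp (\<zeta> t)))) = L"
proof -
  have "L = integral {0..h} (\<lambda>y. 1 / sin (T y))"
    unfolding length_\<theta>star[symmetric] using negligible_if_AE_lebesgue[OF AE_eq_T]
    by (intro integral_spike) auto
  also have "\<dots> = integral {0..h} (\<lambda>y. 1 / sin (phi \<theta>0 \<kappa> ((exp (-\<kappa>) - 1) * exp (\<zeta> (y + - h)))))"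
    by (intro Henstock_Kurzweil_Integration.integral_cong) (simp add: T_eq_phi_\<zeta>)
  also have "\<dots> = integral {-h..0} (\<lambda>t. 1 / sin (phi \<theta>0 \<kappa> ((exp (-\<kappa>) - 1) * exp (\<zeta> t))))"
    using integral_shift_real_ivl[of "-h" "-h" 0] by simp
  finally show ?thesis ..
qed

end

theorem mainTheorem6:
  fixes \<theta>0 L \<kappa> \<rho> hbar hstar :: real
    and \<zeta> \<theta>hat Istar \<theta>star :: "real \<Rightarrow> real"
  assumes "0 < \<theta>0" "\<theta>0 < pi/2" "L > 0" "\<kappa> > 0" "\<rho> > 0"
    and "\<zeta> 0 = 0"
    and "\<And>t. t \<le> 0 \<Longrightarrow> (\<zeta> has_real_derivative
            (- \<rho> * \<kappa> / sin (phi \<theta>0 \<kappa> ((exp (-\<kappa>) - 1) * exp (\<zeta> t))))) (at t within {..0})"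
    and "\<And>t. t \<le> 0 \<Longrightarrow> \<theta>hat t = phi \<theta>0 \<kappa> ((exp (-\<kappa>) - 1) * exp (\<zeta> t))"
    and "hbar > 0"
    and "integral {-hbar..0} (\<lambda>t. 1 / sin (\<theta>hat t)) = L"
    and "competitive_equilibrium \<theta>0 L \<kappa> \<rho> Istar hstar \<theta>star"
  shows "hstar = hbar \<and>
         (AE y in lebesgue. y \<in> {0..hbar} \<longrightarrow> \<theta>star y = \<theta>hat (y - hbar))"
proof -
  interpret equilibrium_with_solution \<theta>0 \<kappa> L \<rho> Istar \<theta>star hstar \<zeta>
    by unfold_locales (use assms in auto)
  have \<theta>hat: "\<theta>hat t \<in> {\<theta>0..pi/2}" if "t \<le> 0" for t
    using phi_\<zeta>_range[OF that] assms(8)[OF that] by simp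
  have length_star: "integral {-hstar..0} (\<lambda>t. 1 / sin (\<theta>hat t)) = L"
    unfolding length_phi_\<zeta>[symmetric] using assms(8) by (intro Henstock_Kurzweil_Integration.integral_cong) auto
  \<comment> \<open>both integrals equal \<open>L > 0\<close>, so both integrands are integrable\<close>
  have "-hstar = -hbar"
  proof (rule left_endpoint_unique_if_integrand_ge[where f = "\<lambda>t. 1 / sin (\<theta>hat t)" and m = 1 and c = 0])
    show "(\<lambda>t. 1 / sin (\<theta>hat t)) integrable_on {-hstar..0}" "(\<lambda>t. 1 / sin (\<theta>hat t)) integrable_on {-hbar..0}"
      using length_star assms(3,10) not_integrable_integral by force+
    show "1 \<le> 1 / sin (\<theta>hat t)" if "t \<in> {min (-hstar) (-hbar)..0}" for t
      using inverse_sin_bounds(1) \<theta>hat that by auto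
  qed (use length_star assms(9,10) h_pos in auto)
  then have "hstar = hbar" by simp
  moreover have "T y = \<theta>hat (y - hstar)" if "y \<in> {0..hstar}" for y
    using T_eq_phi_\<zeta>[OF that] assms(8)[of "y - hstar"] that by simp
  ultimately show ?thesis
    using AE_eq_T by (auto elim!: AE_mp intro!: AE_I2)
qed

end
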